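(* Let $f_{s_1d}, f_{s_1r}, f_{rd}, g_{rd}^{s_1}, g_{s_1d}^{r}\in[0,1]$ satisfy $0\le g_{s_1d}^{r}\le f_{s_1d}$, $0\le g_{rd}^{s_1}< f_{rd}$, set $T_1=(1-f_{s_1d})f_{s_1r}$, and assume $T_1+f_{s_1d}>0$ and $T_1+g_{rd}^{s_1}>0$. For $\beta\in[0,1]$ define $$\mu_1^{\mathrm{SBC}}(\beta)=(1-\beta)(f_{s_1d}+T_1)+\beta\,g_{s_1d}^{r},\qquad \mu_{u_1}^{\mathrm{SBC}}(\beta)=\frac{f_{rd}}{(1-\beta)T_1+f_{rd}-\beta\,g_{rd}^{s_1}}\,\mu_1^{\mathrm{SBC}}(\beta).$$ If $$f_{rd}-g_{rd}^{s_1}\le \frac{g_{s_1d}^{r}(T_1+f_{rd})}{T_1+f_{s_1d}},$$ then $$\max_{0\le\beta\le 1}\min\{\mu_1^{\mathrm{SBC}}(\beta),\mu_{u_1}^{\mathrm{SBC}}(\beta)\}=\Big(1-\frac{T_1}{T_1+g_{rd}^{s_1}}\Big)(f_{s_1d}+T_1)+\frac{T_1}{T_1+g_{rd}^{s_1}}\,g_{s_1d}^{r},$$ attained at $\beta^*=T_1/(T_1+g_{rd}^{s_1})$.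
   Context: $f_{mn}$ denotes the probability that link $(m,n)$ is not in outage and $g_{mn}^{I}$ the probability that it is not in outage under simultaneous interference from node $I$ (so $g_{mn}^I\le f_{mn}$). This is the optimization of the maximal stable throughput of a single source $s_1$ in the sensing-based cooperative scheme over the probability $\beta$ that the relay transmits during a busy slot. *)

theory Defs
  imports Complex_Main
begin

definition T1 :: "real \<Rightarrow> real \<Rightarrow> real" where
  "T1 fsd fsr = (1 - fsd) * fsr"

definition mu1_SBC :: "real \<Rightarrow> real \<Rightarrow> real \<Rightarrow> real \<Rightarrow> real" where
  "mu1_SBC fsd fsr gsdr \<beta> = (1 - \<beta>) * (fsd + T1 fsd fsr) + \<beta> * gsdr"

definition muu1_SBC :: "real \<Rightarrow> real \<Rightarrow> real \<Rightarrow> real \<Rightarrow> real \<Rightarrow> real \<Rightarrow> real" where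
  "muu1_SBC fsd fsr frd grds gsdr \<beta> =
     frd / ((1 - \<beta>) * T1 fsd fsr + frd - \<beta> * grds) * mu1_SBC fsd fsr gsdr \<beta>"

end

theory Submission
  imports Defs
begin

text \<open>Both throughputs are driven by the same decreasing linear function
  \<open>\<mu>\<^sub>1(\<beta>) = A - \<beta> B\<close>, where \<open>A = f_sd + T1\<close> and \<open>B = A - g_sd \<ge> 0\<close>; the
  relay-queue term multiplies it by \<open>f_rd / (f_rd + (\<beta>* - \<beta>) E)\<close> with
  \<open>E = T1 + g_rd\<close>, a factor that equals 1 exactly at \<open>\<beta>*\<close>. For \<open>\<beta> \<ge> \<beta>*\<close> the linear
  term is already at most its value at \<open>\<beta>*\<close>; for \<open>\<beta> < \<beta>*\<close>, after clearing the
  denominator, the gap between that value and the queue term is \<open>\<beta>* - \<beta>\<close> times a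
  constant whose sign is precisely the hypothesis on \<open>f_rd - g_rd\<close>.\<close>

lemma min_linear_linear_fractional_le:
  fixes A B r e s \<beta> :: real
  assumes "0 \<le> B" "0 < e" "0 < r" "r * B \<le> (A - s * B) * e"
  shows "min (A - \<beta> * B) (r / (r + (s - \<beta>) * e) * (A - \<beta> * B)) \<le> A - s * B"
proof (cases "s \<le> \<beta>")
  case True
  then have "s * B \<le> \<beta> * B" using assms(1) by (rule mult_right_mono)
  then show ?thesis by simp
next
  case False
  then have denom_pos: "0 < r + (s - \<beta>) * e" using assms(2,3) by (simp add: add_pos_pos)
  have "(A - s * B) * (r + (s - \<beta>) * e) - r * (A - \<beta> * B)
      = (s - \<beta>) * ((A - s * B) * e - r * B)"
    by (simp add: algebra_simps)
  also have "\<dots> \<ge> 0" using False assms(4) by simp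
  finally have "r * (A - \<beta> * B) \<le> (A - s * B) * (r + (s - \<beta>) * e)" by simp
  then have "r / (r + (s - \<beta>) * e) * (A - \<beta> * B) \<le> A - s * B"
    using denom_pos by (simp add: pos_divide_le_eq mult.commute)
  then show ?thesis by simp
qed

lemma mu1_SBC_linear:
  "mu1_SBC fsd fsr gsdr \<beta> = (fsd + T1 fsd fsr) - \<beta> * (fsd + T1 fsd fsr - gsdr)"
  by (simp add: mu1_SBC_def algebra_simps)

lemma muu1_SBC_crossing_form:
  assumes "T1 fsd fsr + grds \<noteq> 0"
  shows "muu1_SBC fsd fsr frd grds gsdr \<beta> =
    frd / (frd + (T1 fsd fsr / (T1 fsd fsr + grds) - \<beta>) * (T1 fsd fsr + grds))
      * mu1_SBC fsd fsr gsdr \<beta>"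
proof -
  have "(1 - \<beta>) * T1 fsd fsr + frd - \<beta> * grds
      = frd + (T1 fsd fsr / (T1 fsd fsr + grds) - \<beta>) * (T1 fsd fsr + grds)"
    using assms by (simp add: field_simps)
  then show ?thesis by (simp add: muu1_SBC_def)
qed

theorem lemma1:
  fixes fsd fsr frd grds gsdr :: real
  assumes "0 \<le> fsd" "fsd \<le> 1" "0 \<le> fsr" "fsr \<le> 1" "0 \<le> frd" "frd \<le> 1"
    and "0 \<le> grds" "grds \<le> 1" "0 \<le> gsdr" "gsdr \<le> 1"
    and "gsdr \<le> fsd" "grds < frd"
    and "T1 fsd fsr + fsd > 0" "T1 fsd fsr + grds > 0"
    and "frd - grds \<le> gsdr * (T1 fsd fsr + frd) / (T1 fsd fsr + fsd)"
  defines "\<beta>s \<equiv> T1 fsd fsr / (T1 fsd fsr + grds)"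
  defines "V \<equiv> (1 - \<beta>s) * (fsd + T1 fsd fsr) + \<beta>s * gsdr"
  shows "0 \<le> \<beta>s \<and> \<beta>s \<le> 1
    \<and> min (mu1_SBC fsd fsr gsdr \<beta>s) (muu1_SBC fsd fsr frd grds gsdr \<beta>s) = V
    \<and> (\<forall>\<beta>\<in>{0..1}. min (mu1_SBC fsd fsr gsdr \<beta>) (muu1_SBC fsd fsr frd grds gsdr \<beta>) \<le> V)"
proof -
  define t A B E where "t = T1 fsd fsr" and "A = fsd + t" and "B = A - gsdr" and "E = t + grds"
  have "0 \<le> t" using assms(2,3) by (simp add: t_def T1_def)
  have "0 < E" "0 < frd" "0 \<le> B" "0 < A"
    using assms(7,11-14) \<open>0 \<le> t\<close> by (simp_all add: E_def B_def A_def t_def add.commute)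
  have "\<beta>s * E = t" using \<open>0 < E\<close> by (simp add: \<beta>s_def E_def t_def)
  have "0 \<le> \<beta>s" "\<beta>s \<le> 1" using \<open>0 \<le> t\<close> \<open>0 < E\<close> assms(7) by (simp_all add: \<beta>s_def t_def E_def)
  have mu: "mu1_SBC fsd fsr gsdr \<beta> = A - \<beta> * B" for \<beta>
    by (simp add: mu1_SBC_linear A_def B_def t_def)
  have muu: "muu1_SBC fsd fsr frd grds gsdr \<beta> = frd / (frd + (\<beta>s - \<beta>) * E) * (A - \<beta> * B)" for \<beta>
    using assms(14) by (simp add: muu1_SBC_crossing_form mu \<beta>s_def E_def t_def)
  have "V = A - \<beta>s * B" by (simp add: V_def A_def B_def t_def algebra_simps)
  have "A * (frd - grds) \<le> gsdr * (t + frd)"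
    using assms(15) \<open>0 < A\<close> by (simp add: A_def t_def add.commute pos_le_divide_eq mult.commute)
  then have "(frd + t) * B \<le> A * E" by (simp add: B_def E_def algebra_simps)
  then have "frd * B \<le> (A - \<beta>s * B) * E"
    using \<open>\<beta>s * E = t\<close> by (simp add: algebra_simps)
  then have "min (mu1_SBC fsd fsr gsdr \<beta>) (muu1_SBC fsd fsr frd grds gsdr \<beta>) \<le> V" for \<beta>
    unfolding mu muu \<open>V = A - \<beta>s * B\<close>
    using min_linear_linear_fractional_le \<open>0 \<le> B\<close> \<open>0 < E\<close> \<open>0 < frd\<close> by blast
  moreover have "min (mu1_SBC fsd fsr gsdr \<beta>s) (muu1_SBC fsd fsr frd grds gsdr \<beta>s) = V"
    using \<open>0 < frd\<close> by (simp add: mu muu \<open>V = A - \<beta>s * B\<close>)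
  ultimately show ?thesis using \<open>0 \<le> \<beta>s\<close> \<open>\<beta>s \<le> 1\<close> by blast
qed

end
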